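(* Let $d=(d_1,\ldots,d_n)$ be a degree sequence with $n\ge 3$ and $\sum_i d_i>2n$, and let $m=\frac12\sum_i d_i$. There is a core cactus realization of $d$ if and only if $\mu_{odd}\le\mu_1$ and $m\le\left\lfloor\frac{3(n-1)-\mu_1}{2}\right\rfloor$.
   Context: A degree sequence is a sequence of integers $d_i\in\{1,\ldots,n-1\}$ with even sum and $d_1\ge\cdots\ge d_n$; a realization is a simple graph on $\{1,\ldots,n\}$ with $\deg(i)=d_i$. A cactus is a connected simple graph in which every edge lies on at most one cycle; a bridge is an edge whose removal disconnects the graph; a core cactus is a cactus with no bridge whose removal splits the graph into two components each containing a cycle. $\mu_1$ is the number of entries of $d$ equal to $1$, and $\mu_{odd}$ is the number of entries that are odd integers greater than $1$. *)

theory Defs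
  imports Main
begin

definition simple_graph :: "nat set \<Rightarrow> nat set set \<Rightarrow> bool" where
  "simple_graph V E \<longleftrightarrow> (\<forall>e\<in>E. \<exists>u v. e = {u, v} \<and> u \<noteq> v \<and> u \<in> V \<and> v \<in> V)"

definition adj :: "nat set set \<Rightarrow> nat \<Rightarrow> nat \<Rightarrow> bool" where
  "adj E u v \<longleftrightarrow> {u, v} \<in> E"

definition deg :: "nat set set \<Rightarrow> nat \<Rightarrow> nat" where
  "deg E v = card {e\<in>E. v \<in> e}"

definition connected_graph :: "nat set \<Rightarrow> nat set set \<Rightarrow> bool" where
  "connected_graph V E \<longleftrightarrow> V \<noteq> {} \<and> (\<forall>u\<in>V. \<forall>v\<in>V. (adj E)\<^sup>*\<^sup>* u v)"

definition cycle_edges :: "nat list \<Rightarrow> nat set set" where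
  "cycle_edges vs = {{vs ! i, vs ! ((i + 1) mod length vs)} | i. i < length vs}"

definition is_cycle :: "nat set set \<Rightarrow> nat set set \<Rightarrow> bool" where
  "is_cycle E C \<longleftrightarrow> (\<exists>vs. distinct vs \<and> length vs \<ge> 3 \<and> C = cycle_edges vs \<and> C \<subseteq> E)"

definition cactus :: "nat set \<Rightarrow> nat set set \<Rightarrow> bool" where
  "cactus V E \<longleftrightarrow> simple_graph V E \<and> connected_graph V E \<and>
     (\<forall>e\<in>E. \<forall>C1 C2. is_cycle E C1 \<and> is_cycle E C2 \<and> e \<in> C1 \<and> e \<in> C2 \<longrightarrow> C1 = C2)"

definition is_bridge :: "nat set \<Rightarrow> nat set set \<Rightarrow> nat set \<Rightarrow> bool" where
  "is_bridge V E e \<longleftrightarrow> e \<in> E \<and> \<not> connected_graph V (E - {e})"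

definition component :: "nat set set \<Rightarrow> nat \<Rightarrow> nat set" where
  "component E u = {w. (adj E)\<^sup>*\<^sup>* u w}"

definition has_cycle_in :: "nat set set \<Rightarrow> nat set \<Rightarrow> bool" where
  "has_cycle_in E S \<longleftrightarrow> (\<exists>C. is_cycle E C \<and> \<Union>C \<subseteq> S)"

definition core_cactus :: "nat set \<Rightarrow> nat set set \<Rightarrow> bool" where
  "core_cactus V E \<longleftrightarrow> cactus V E \<and>
     \<not> (\<exists>u v. is_bridge V E {u, v} \<and>
            has_cycle_in (E - {{u, v}}) (component (E - {{u, v}}) u) \<and>
            has_cycle_in (E - {{u, v}}) (component (E - {{u, v}}) v))"

definition degree_sequence :: "nat \<Rightarrow> (nat \<Rightarrow> nat) \<Rightarrow> bool" where
  "degree_sequence n d \<longleftrightarrow> (\<forall>i\<in>{1..n}. 1 \<le> d i \<and> d i \<le> n - 1) \<and>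
     even (\<Sum>i=1..n. d i) \<and> (\<forall>i j. 1 \<le> i \<and> i \<le> j \<and> j \<le> n \<longrightarrow> d j \<le> d i)"

definition realization :: "nat \<Rightarrow> (nat \<Rightarrow> nat) \<Rightarrow> nat set set \<Rightarrow> bool" where
  "realization n d E \<longleftrightarrow> simple_graph {1..n} E \<and> (\<forall>i\<in>{1..n}. deg E i = d i)"

definition mu1 :: "nat \<Rightarrow> (nat \<Rightarrow> nat) \<Rightarrow> nat" where
  "mu1 n d = card {i\<in>{1..n}. d i = 1}"

definition mu_odd :: "nat \<Rightarrow> (nat \<Rightarrow> nat) \<Rightarrow> nat" where
  "mu_odd n d = card {i\<in>{1..n}. odd (d i) \<and> d i > 1}"

end

theory Submission
  imports Defs
begin

text \<open>In a graph whose cycles are pairwise edge-disjoint, adding the edges one at a time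
  shows 2|E| + 3c + b \<le> 3|V|, where c is the number of components and b the number of edges on
  no cycle. In a cactus c = 1 and, if there are at least three vertices, the leaves inject into
  the edges on no cycle; hence 2m + mu_1 + 3 \<le> 3n, which is the bound on m. In a core cactus
  the edges on no cycle form a forest in which distinct cycle vertices lie in distinct components,
  so there are at most as many of them as vertices off the cycles, and counting their degrees
  gives mu_odd \<le> mu_1.

  By induction on n, split off a leaf or two vertices of degree two, realize the rest,
  and reattach them as a pendant edge or a triangle at a vertex of large degree. The graphs built
  this way are cacti in which every edge lies on a cycle or ends in a leaf, and such a cactus has
  no bridge with a cycle on either side.\<close>

section \<open>Reachability and components\<close>

lemma adj_sym: "adj E x y \<Longrightarrow> adj E y x"
  by (simp add: adj_def insert_commute)

lemma rtranclp_adj_sym: "(adj E)\<^sup>*\<^sup>* x y \<Longrightarrow> (adj E)\<^sup>*\<^sup>* y x"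
  by (induction rule: rtranclp_induct) (auto dest: adj_sym intro: converse_rtranclp_into_rtranclp)

lemma rtranclp_adj_mono: "(adj F)\<^sup>*\<^sup>* x y \<Longrightarrow> F \<subseteq> E \<Longrightarrow> (adj E)\<^sup>*\<^sup>* x y"
  by (induction rule: rtranclp_induct) (simp, meson adj_def rtranclp.rtrancl_into_rtrancl subsetD)

lemma rtranclp_adj_edge: "{x, y} \<in> E \<Longrightarrow> (adj E)\<^sup>*\<^sup>* x y"
  by (simp add: adj_def r_into_rtranclp)

lemma component_eq: "(adj E)\<^sup>*\<^sup>* x y \<Longrightarrow> component E x = component E y"
  unfolding component_def by (auto intro: rtranclp_trans dest: rtranclp_adj_sym)

lemma component_empty: "component {} x = {x}"
proof -
  have "(adj {})\<^sup>*\<^sup>* x y \<Longrightarrow> y = x" for y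
    by (induction rule: rtranclp_induct) (auto simp: adj_def)
  then show ?thesis unfolding component_def by auto
qed

lemma rtranclp_adj_insert_reachable:
  assumes "(adj F)\<^sup>*\<^sup>* u v" "(adj (insert {u, v} F))\<^sup>*\<^sup>* a b"
  shows "(adj F)\<^sup>*\<^sup>* a b"
  using assms(2)
proof (induction rule: rtranclp_induct)
  case (step y z)
  have "(adj F)\<^sup>*\<^sup>* y z"
  proof (cases "{y, z} = {u, v}")
    case True
    then show ?thesis using assms(1) rtranclp_adj_sym by (auto simp: doubleton_eq_iff)
  next
    case False
    then show ?thesis using step(2) by (simp add: adj_def rtranclp_adj_edge)
  qed
  with step(3) show ?case by (rule rtranclp_trans)
qed simp

lemma component_insert_reachable:
  "(adj F)\<^sup>*\<^sup>* u v \<Longrightarrow> component (insert {u, v} F) = component F"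
  unfolding component_def
  by (auto intro: rtranclp_adj_insert_reachable rtranclp_adj_mono[of F])

lemma connected_graph_reach:
  "connected_graph V E \<Longrightarrow> u \<in> V \<Longrightarrow> v \<in> V \<Longrightarrow> (adj E)\<^sup>*\<^sup>* u v"
  unfolding connected_graph_def by blast

lemma simple_graph_edgeE:
  assumes "simple_graph V E" "g \<in> E"
  obtains a b where "g = {a, b}" "a \<noteq> b" "a \<in> V" "b \<in> V"
  using assms unfolding simple_graph_def by blast

lemma simple_graph_edge_subset: "simple_graph V E \<Longrightarrow> g \<in> E \<Longrightarrow> g \<subseteq> V"
  by (auto elim: simple_graph_edgeE)

lemma simple_graph_subset: "simple_graph V E \<Longrightarrow> F \<subseteq> E \<Longrightarrow> simple_graph V F"
  unfolding simple_graph_def by blast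

lemma simple_graph_finite: "finite V \<Longrightarrow> simple_graph V E \<Longrightarrow> finite E"
  by (rule finite_subset[of E "Pow V"]) (auto elim: simple_graph_edgeE)

lemma sum_deg_eq_twice_card:
  assumes "finite V" "simple_graph V E"
  shows "(\<Sum>v\<in>V. deg E v) = 2 * card E"
proof -
  have fE: "finite E" using simple_graph_finite assms by blast
  have "(\<Sum>v\<in>V. deg E v) = (\<Sum>v\<in>V. \<Sum>e\<in>E. of_bool (v \<in> e))"
    unfolding deg_def using fE by (intro sum.cong) (auto simp: Int_def)
  also have "\<dots> = (\<Sum>e\<in>E. \<Sum>v\<in>V. of_bool (v \<in> e))" by (rule sum.swap)
  also have "\<dots> = (\<Sum>e\<in>E. 2)"
  proof (rule sum.cong)
    fix e assume "e \<in> E"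
    then obtain u w where uw: "e = {u, w}" "u \<noteq> w" "u \<in> V" "w \<in> V"
      using assms(2) by (blast elim: simple_graph_edgeE)
    then have "V \<inter> {v. v \<in> e} = {u, w}" by auto
    then show "(\<Sum>v\<in>V. of_bool (v \<in> e)) = (2::nat)" using assms(1) uw(2) by simp
  qed simp
  finally show ?thesis by simp
qed

lemma deg_eq_1E:
  assumes "deg E x = 1"
  obtains g where "g \<in> E" "x \<in> g" "\<And>h. h \<in> E \<Longrightarrow> x \<in> h \<Longrightarrow> h = g"
proof -
  obtain g where "{h \<in> E. x \<in> h} = {g}"
    using assms unfolding deg_def by (meson card_1_singletonE)
  then show ?thesis using that by blast
qed

section \<open>Cycles as vertex lists\<close>

definition cycle_edge :: "nat list \<Rightarrow> nat \<Rightarrow> nat set" where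
  "cycle_edge vs i = {vs ! i, vs ! (Suc i mod length vs)}"

lemma mod_less_double: "a < 2 * L \<Longrightarrow> a mod L = (if a < L then a else a - L)" for a L :: nat
  by (simp add: le_mod_geq)

lemma mod_length_less: "i < length vs \<Longrightarrow> a mod length vs < length vs"
  by (cases vs) auto

lemma cycle_edges_eq_image: "cycle_edges vs = cycle_edge vs ` {..<length vs}"
  by (auto simp: cycle_edges_def cycle_edge_def)

lemma cycle_edge_inj:
  assumes "distinct vs" "3 \<le> length vs" "i < length vs" "j < length vs"
    and "cycle_edge vs i = cycle_edge vs j"
  shows "i = j"
proof (rule ccontr)
  assume ne: "i \<noteq> j"
  let ?L = "length vs"
  have "Suc i mod ?L < ?L" "Suc j mod ?L < ?L" using assms(3) by (auto intro: mod_length_less)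
  moreover from assms(5) ne have "vs ! i = vs ! (Suc j mod ?L) \<and> vs ! (Suc i mod ?L) = vs ! j"
    unfolding cycle_edge_def using assms(1,3,4) nth_eq_iff_index_eq by (auto simp: doubleton_eq_iff)
  ultimately have "i = Suc j mod ?L" "Suc i mod ?L = j"
    using assms(1,3,4) nth_eq_iff_index_eq by metis+
  then show False using assms(2,3,4) ne by (auto simp: mod_Suc split: if_splits)
qed

lemma cycle_edge_subset: "i < length vs \<Longrightarrow> cycle_edge vs i \<subseteq> set vs"
  using mod_length_less[of i vs "Suc i"] by (simp add: cycle_edge_def)

lemma cycle_edge_in_cycle_edges: "i < length vs \<Longrightarrow> cycle_edge vs i \<in> cycle_edges vs"
  by (auto simp: cycle_edges_eq_image)

lemma Union_cycle_edges: "3 \<le> length vs \<Longrightarrow> \<Union>(cycle_edges vs) = set vs"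
proof
  show "\<Union>(cycle_edges vs) \<subseteq> set vs"
    unfolding cycle_edges_eq_image using cycle_edge_subset by blast
  show "set vs \<subseteq> \<Union>(cycle_edges vs)"
    unfolding cycle_edges_eq_image by (force simp: cycle_edge_def in_set_conv_nth)
qed

lemma card_cycle_edges_at:
  assumes "distinct vs" "3 \<le> length vs" "x \<in> set vs"
  shows "card {g \<in> cycle_edges vs. x \<in> g} = 2"
proof -
  let ?L = "length vs"
  obtain k where k: "k < ?L" "x = vs ! k" using assms(3) by (auto simp: in_set_conv_nth)
  define p where "p = (k + ?L - 1) mod ?L"
  have pL: "p < ?L" using k(1) unfolding p_def by (rule mod_length_less)
  have pred: "k = Suc i mod ?L \<longleftrightarrow> i = p" if "i < ?L" for i
    using that k(1) by (auto simp: p_def mod_Suc mod_less_double split: if_splits)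
  have "{i. i < ?L \<and> x \<in> cycle_edge vs i} = {k, p}"
  proof -
    have "x \<in> cycle_edge vs i \<longleftrightarrow> i = k \<or> i = p" if i: "i < ?L" for i
    proof -
      have "x \<in> cycle_edge vs i \<longleftrightarrow> k = i \<or> k = Suc i mod ?L"
        using nth_eq_iff_index_eq[OF assms(1) k(1) i] k(2)
          nth_eq_iff_index_eq[OF assms(1) k(1) mod_length_less[OF i]]
        by (auto simp: cycle_edge_def)
      then show ?thesis using pred[OF i] by auto
    qed
    then show ?thesis using k(1) pL by blast
  qed
  moreover have "{g \<in> cycle_edges vs. x \<in> g} = cycle_edge vs ` {i. i < ?L \<and> x \<in> cycle_edge vs i}"
    unfolding cycle_edges_eq_image by auto
  moreover have "k \<noteq> p"
  proof
    assume "k = p"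
    then have "k = Suc k mod ?L" using pred[OF k(1)] by simp
    then show False using k(1) assms(2) by (simp add: mod_Suc split: if_splits)
  qed
  moreover have "inj_on (cycle_edge vs) {k, p}"
    using cycle_edge_inj[OF assms(1,2)] k(1) pL unfolding inj_on_def by blast
  ultimately show ?thesis by (simp add: card_image)
qed

lemma cycle_minus_edge_reach:
  assumes "distinct vs" "3 \<le> length vs" "i < length vs" "x \<in> set vs" "y \<in> set vs"
  shows "(adj (cycle_edges vs - {cycle_edge vs i}))\<^sup>*\<^sup>* x y"
proof -
  let ?L = "length vs"
  let ?F = "cycle_edges vs - {cycle_edge vs i}"
  \<comment> \<open>walk once around the cycle, starting just after the removed edge\<close>
  have walk_around: "(adj ?F)\<^sup>*\<^sup>* (vs ! (Suc i mod ?L)) (vs ! ((Suc i + t) mod ?L))" if "t < ?L" for t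
    using that
  proof (induction t)
    case (Suc t)
    let ?j = "(Suc i + t) mod ?L"
    have jL: "?j < ?L" using assms(3) by (rule mod_length_less)
    have "?j \<noteq> i" using assms(3) Suc.prems by (simp add: mod_less_double; linarith)
    then have "cycle_edge vs ?j \<in> ?F"
      using cycle_edge_inj[OF assms(1,2) jL assms(3)] cycle_edge_in_cycle_edges[OF jL] by blast
    moreover have "Suc ?j mod ?L = (Suc i + Suc t) mod ?L" by (simp add: mod_Suc_eq)
    ultimately have "adj ?F (vs ! ?j) (vs ! ((Suc i + Suc t) mod ?L))"
      unfolding adj_def cycle_edge_def by simp
    with Suc show ?case by (simp add: rtranclp.rtrancl_into_rtrancl)
  qed simp
  have from_start: "(adj ?F)\<^sup>*\<^sup>* (vs ! (Suc i mod ?L)) z" if z: "z \<in> set vs" for z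
  proof -
    obtain j where j: "j < ?L" "z = vs ! j" using z by (auto simp: in_set_conv_nth)
    define a where "a = Suc i mod ?L"
    define t where "t = (j + ?L - a) mod ?L"
    have "a < ?L" using assms(3) unfolding a_def by (rule mod_length_less)
    then have "t < ?L" "(a + t) mod ?L = j"
      using j(1) mod_length_less[of a vs] by (simp_all add: t_def mod_add_right_eq)
    moreover have "(Suc i + t) mod ?L = (a + t) mod ?L" by (simp add: a_def mod_add_left_eq)
    ultimately show ?thesis using walk_around j(2) by metis
  qed
  show ?thesis
    using from_start[OF assms(4)] from_start[OF assms(5)] by (meson rtranclp_adj_sym rtranclp_trans)
qed

lemma cycle_reach:
  assumes "distinct vs" "3 \<le> length vs" "x \<in> set vs" "y \<in> set vs"
  shows "(adj (cycle_edges vs))\<^sup>*\<^sup>* x y"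
  using cycle_minus_edge_reach[OF assms(1,2) _ assms(3,4), of 0] assms(2)
  by (metis Diff_subset rtranclp_adj_mono gr0I list.size(3) not_numeral_le_zero)

lemma simple_graph_cycle_edges:
  assumes "distinct vs" "3 \<le> length vs"
  shows "simple_graph (set vs) (cycle_edges vs)"
  unfolding simple_graph_def cycle_edges_eq_image
proof
  fix g assume "g \<in> cycle_edge vs ` {..<length vs}"
  then obtain i where i: "i < length vs" "g = cycle_edge vs i" by blast
  let ?L = "length vs"
  have sL: "Suc i mod ?L < ?L" using i(1) by (rule mod_length_less)
  have "i \<noteq> Suc i mod ?L" using i(1) assms(2) by (simp add: mod_Suc)
  then have "vs ! i \<noteq> vs ! (Suc i mod ?L)" using nth_eq_iff_index_eq[OF assms(1) i(1) sL] by simp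
  then show "\<exists>u v. g = {u, v} \<and> u \<noteq> v \<and> u \<in> set vs \<and> v \<in> set vs"
    using i sL nth_mem unfolding cycle_edge_def by blast
qed

text \<open>At each of its vertices the smaller cycle already uses both edges of the larger one, so its
  vertex set is closed under adjacency in the larger cycle.\<close>
lemma cycle_edges_subset_imp_eq:
  assumes "distinct ws" "3 \<le> length ws" "distinct vs" "3 \<le> length vs"
    and sub: "cycle_edges ws \<subseteq> cycle_edges vs"
  shows "cycle_edges ws = cycle_edges vs"
proof -
  let ?A = "cycle_edges ws" and ?B = "cycle_edges vs"
  have wv: "set ws \<subseteq> set vs"
    using sub Union_cycle_edges[OF assms(2)] Union_cycle_edges[OF assms(4)] by blast
  have at_vertex: "{g \<in> ?B. x \<in> g} \<subseteq> ?A" if "x \<in> set ws" for x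
  proof -
    have "{g \<in> ?A. x \<in> g} \<subseteq> {g \<in> ?B. x \<in> g}" using sub by blast
    moreover have "card {g \<in> ?A. x \<in> g} = card {g \<in> ?B. x \<in> g}"
      using card_cycle_edges_at[OF assms(1,2) that] card_cycle_edges_at[OF assms(3,4)] wv that
      by auto
    moreover have "finite ?B" unfolding cycle_edges_eq_image by simp
    ultimately have "{g \<in> ?A. x \<in> g} = {g \<in> ?B. x \<in> g}" by (simp add: card_subset_eq)
    then show ?thesis by blast
  qed
  have x0: "ws ! 0 \<in> set ws" using assms(2) by (intro nth_mem) linarith
  have closed: "y \<in> set ws" if "(adj ?B)\<^sup>*\<^sup>* (ws ! 0) y" for y
    using that
  proof (induction rule: rtranclp_induct)
    case (step y z)
    then have "{y, z} \<in> ?A" using at_vertex[of y] by (auto simp: adj_def)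
    then show ?case using Union_cycle_edges[OF assms(2)] by blast
  qed (rule x0)
  have vw: "set vs \<subseteq> set ws"
  proof
    fix y assume "y \<in> set vs"
    then have "(adj ?B)\<^sup>*\<^sup>* (ws ! 0) y" using cycle_reach[OF assms(3,4)] x0 wv by blast
    then show "y \<in> set ws" by (rule closed)
  qed
  have "?B \<subseteq> ?A"
  proof
    fix g assume g: "g \<in> ?B"
    then obtain x where "x \<in> g" using simple_graph_cycle_edges[OF assms(3,4)]
      by (auto elim: simple_graph_edgeE)
    moreover from this have "x \<in> set ws" using g vw Union_cycle_edges[OF assms(4)] by blast
    ultimately show "g \<in> ?A" using at_vertex g by blast
  qed
  with sub show ?thesis by blast
qed

lemma cycle_edges_triangle: "cycle_edges [w, x, y] = {{w, x}, {x, y}, {y, w}}"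
proof -
  have "{..<length [w, x, y]} = {0, 1, 2}" by (auto simp: numeral_3_eq_3 less_Suc_eq)
  then have "cycle_edges [w, x, y] = cycle_edge [w, x, y] ` {0, 1, 2}"
    by (simp add: cycle_edges_eq_image)
  then show ?thesis by (simp add: cycle_edge_def insert_commute)
qed

lemma card_cycle_edges:
  assumes "distinct vs" "3 \<le> length vs"
  shows "card (cycle_edges vs) = length vs"
  unfolding cycle_edges_eq_image
  by (rule trans[OF card_image]) (auto intro: inj_onI cycle_edge_inj[OF assms])

lemma is_cycle_card: "is_cycle E C \<Longrightarrow> 3 \<le> card C"
  unfolding is_cycle_def using card_cycle_edges by auto

lemma is_cycle_subset: "is_cycle E C \<Longrightarrow> C \<subseteq> E"
  unfolding is_cycle_def by blast

lemma is_cycle_mono: "is_cycle F C \<Longrightarrow> F \<subseteq> E \<Longrightarrow> is_cycle E C"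
  unfolding is_cycle_def by blast

lemma is_cycle_Diff: "is_cycle E C \<Longrightarrow> g \<notin> C \<Longrightarrow> is_cycle (E - {g}) C"
  unfolding is_cycle_def by blast

lemma is_cycle_card_at:
  assumes "is_cycle E C" "x \<in> \<Union>C"
  shows "card {g \<in> C. x \<in> g} = 2"
proof -
  obtain vs where "distinct vs" "3 \<le> length vs" "C = cycle_edges vs"
    using assms(1) unfolding is_cycle_def by blast
  then show ?thesis using card_cycle_edges_at Union_cycle_edges assms(2) by simp
qed

lemma deg_ge_2_if_on_cycle:
  assumes "finite E" "is_cycle E C" "x \<in> \<Union>C"
  shows "2 \<le> deg E x"
proof -
  have "card {g \<in> C. x \<in> g} \<le> deg E x"
    unfolding deg_def using is_cycle_subset[OF assms(2)] assms(1) by (intro card_mono) auto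
  then show ?thesis using is_cycle_card_at[OF assms(2,3)] by simp
qed

lemma has_cycle_in_component:
  assumes "is_cycle E C" "x \<in> \<Union>C"
  shows "has_cycle_in E (component E x)"
proof -
  obtain vs where vs: "distinct vs" "3 \<le> length vs" "C = cycle_edges vs" "C \<subseteq> E"
    using assms(1) unfolding is_cycle_def by blast
  have "(adj E)\<^sup>*\<^sup>* x y" if "y \<in> \<Union>C" for y
    using cycle_reach[OF vs(1,2)] rtranclp_adj_mono[OF _ vs(4)] assms(2) that
      Union_cycle_edges[OF vs(2)] vs(3) by simp
  then have "\<Union>C \<subseteq> component E x" unfolding component_def by blast
  then show ?thesis unfolding has_cycle_in_def using assms(1) by blast
qed

fun walk :: "nat set set \<Rightarrow> nat list \<Rightarrow> bool" where
  "walk E (x # y # xs) \<longleftrightarrow> {x, y} \<in> E \<and> walk E (y # xs)"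
| "walk E _ \<longleftrightarrow> True"

lemma walk_ConsD: "walk E (x # xs) \<Longrightarrow> walk E xs"
  by (cases xs) auto

lemma walk_appendD: "walk E (xs @ ys) \<Longrightarrow> walk E ys"
  by (induction xs) (auto dest: walk_ConsD)

lemma walk_nth: "walk E p \<Longrightarrow> Suc i < length p \<Longrightarrow> {p ! i, p ! Suc i} \<in> E"
proof (induction E p arbitrary: i rule: walk.induct)
  case (1 E x y xs)
  then show ?case by (cases i) auto
qed auto

lemma walk_reach: "walk E p \<Longrightarrow> p \<noteq> [] \<Longrightarrow> (adj E)\<^sup>*\<^sup>* (hd p) (last p)"
proof (induction E p rule: walk.induct)
  case (1 E x y xs)
  then have "adj E x y" by (simp add: adj_def)
  moreover have "(adj E)\<^sup>*\<^sup>* y (last (y # xs))" using 1 by simp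
  ultimately show ?case by (simp add: converse_rtranclp_into_rtranclp)
qed auto

lemma walk_Diff: "walk E p \<Longrightarrow> a \<notin> set p \<Longrightarrow> a \<in> g \<Longrightarrow> walk (E - {g}) p"
  by (induction E p rule: walk.induct) auto

lemma rtranclp_adj_path:
  assumes "(adj E)\<^sup>*\<^sup>* u v"
  obtains p where "p \<noteq> []" "hd p = u" "last p = v" "distinct p" "walk E p"
proof -
  have "\<exists>p. p \<noteq> [] \<and> hd p = u \<and> last p = v \<and> distinct p \<and> walk E p"
    using assms
  proof (induction rule: converse_rtranclp_induct)
    case base
    show ?case by (intro exI[of _ "[v]"]) simp
  next
    case (step u y)
    then obtain p where p: "p \<noteq> []" "hd p = y" "last p = v" "distinct p" "walk E p" by blast
    show ?case
    proof (cases "u \<in> set p")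
      case True
      then obtain a b where "p = a @ u # b" by (meson split_list)
      then show ?thesis using p walk_appendD[of E a] by (intro exI[of _ "u # b"]) auto
    next
      case False
      then show ?thesis using p step(1) by (intro exI[of _ "u # p"]) (cases p, auto simp: adj_def)
    qed
  qed
  then show ?thesis using that by blast
qed

lemma cycle_through_edge:
  assumes e: "{u, v} \<in> E" and uv: "u \<noteq> v" and r: "(adj (E - {{u, v}}))\<^sup>*\<^sup>* u v"
  obtains C where "is_cycle E C" "{u, v} \<in> C"
proof -
  let ?E' = "E - {{u, v}}"
  obtain p where p: "p \<noteq> []" "hd p = u" "last p = v" "distinct p" "walk ?E' p"
    using rtranclp_adj_path[OF r] by blast
  let ?L = "length p"
  have hd0: "p ! 0 = u" using p(1,2) by (simp add: hd_conv_nth)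
  have lastL: "p ! (?L - 1) = v" using p(1,3) by (simp add: last_conv_nth)
  have "?L \<noteq> 1" using hd0 lastL uv by auto
  moreover have "?L \<noteq> 2" using walk_nth[OF p(5), of 0] hd0 lastL by auto
  moreover have "?L \<noteq> 0" using p(1) by simp
  ultimately have L3: "3 \<le> ?L" by linarith
  have inner: "cycle_edge p i \<in> ?E'" if "Suc i < ?L" for i
    using walk_nth[OF p(5) that] that by (simp add: cycle_edge_def)
  have last_edge: "cycle_edge p (?L - 1) = {u, v}"
  proof -
    have "Suc (?L - 1) = ?L" using L3 by simp
    then have "Suc (?L - 1) mod ?L = 0" by (metis mod_self)
    then show ?thesis using hd0 lastL by (auto simp: cycle_edge_def)
  qed
  have "cycle_edges p \<subseteq> E"
  proof
    fix g assume "g \<in> cycle_edges p"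
    then obtain i where i: "i < ?L" "g = cycle_edge p i" unfolding cycle_edges_eq_image by blast
    show "g \<in> E"
    proof (cases "Suc i < ?L")
      case False
      then have "i = ?L - 1" using i(1) by simp
      then show ?thesis using i(2) last_edge e by simp
    qed (use inner i in blast)
  qed
  moreover have "{u, v} \<in> cycle_edges p"
    using last_edge cycle_edge_in_cycle_edges[of "?L - 1" p] L3 by simp
  ultimately show ?thesis using that p(4) L3 unfolding is_cycle_def by blast
qed

section \<open>Graphs with edge-disjoint cycles\<close>

definition on_cycle :: "nat set set \<Rightarrow> nat set \<Rightarrow> bool" where
  "on_cycle E e \<longleftrightarrow> (\<exists>C. is_cycle E C \<and> e \<in> C)"

definition cycles_edge_disjoint :: "nat set set \<Rightarrow> bool" where
  "cycles_edge_disjoint E \<longleftrightarrow>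
     (\<forall>e\<in>E. \<forall>C1 C2. is_cycle E C1 \<and> is_cycle E C2 \<and> e \<in> C1 \<and> e \<in> C2 \<longrightarrow> C1 = C2)"

definition non_cycle_edges :: "nat set set \<Rightarrow> nat set set" where
  "non_cycle_edges E = {g \<in> E. \<not> on_cycle E g}"

lemma non_cycle_edges_subset: "non_cycle_edges E \<subseteq> E"
  unfolding non_cycle_edges_def by blast

lemma cactus_iff: "cactus V E \<longleftrightarrow> simple_graph V E \<and> connected_graph V E \<and> cycles_edge_disjoint E"
  unfolding cactus_def cycles_edge_disjoint_def ..

lemma on_cycle_mono: "on_cycle F g \<Longrightarrow> F \<subseteq> E \<Longrightarrow> on_cycle E g"
  unfolding on_cycle_def using is_cycle_mono by meson

lemma cycles_edge_disjointD:
  "cycles_edge_disjoint E \<Longrightarrow> is_cycle E C1 \<Longrightarrow> is_cycle E C2 \<Longrightarrow> g \<in> C1 \<Longrightarrow> g \<in> C2 \<Longrightarrow> C1 = C2"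
  unfolding cycles_edge_disjoint_def using is_cycle_subset by blast

lemma cycles_edge_disjointI:
  "(\<And>C1 C2 g. is_cycle E C1 \<Longrightarrow> is_cycle E C2 \<Longrightarrow> g \<in> C1 \<Longrightarrow> g \<in> C2 \<Longrightarrow> C1 = C2)
    \<Longrightarrow> cycles_edge_disjoint E"
  unfolding cycles_edge_disjoint_def by blast

lemma cycles_edge_disjoint_subset:
  "cycles_edge_disjoint E \<Longrightarrow> F \<subseteq> E \<Longrightarrow> cycles_edge_disjoint F"
  by (rule cycles_edge_disjointI) (meson cycles_edge_disjointD is_cycle_mono)

lemma non_cycle_edges_insert_subset: "non_cycle_edges (insert e F) \<subseteq> insert e (non_cycle_edges F)"
  unfolding non_cycle_edges_def using on_cycle_mono[of F _ "insert e F"] by blast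

lemma card_non_cycle_edges_insert_le:
  assumes "finite F"
  shows "card (non_cycle_edges (insert e F)) \<le> Suc (card (non_cycle_edges F))"
proof -
  have finNC: "finite (non_cycle_edges F)" using assms unfolding non_cycle_edges_def by simp
  then have "card (non_cycle_edges (insert e F)) \<le> card (insert e (non_cycle_edges F))"
    using non_cycle_edges_insert_subset by (intro card_mono) auto
  also have "\<dots> \<le> Suc (card (non_cycle_edges F))" using finNC by (simp add: card_insert_if)
  finally show ?thesis .
qed

text \<open>The other edges of the new cycle lay on no cycle before, as cycles are edge-disjoint.\<close>
lemma card_non_cycle_edges_insert_reachable:
  assumes fin: "finite F" and disj: "cycles_edge_disjoint (insert {u, v} F)"
    and new: "{u, v} \<notin> F" and uv: "u \<noteq> v" and reach: "(adj F)\<^sup>*\<^sup>* u v"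
  shows "card (non_cycle_edges (insert {u, v} F)) + 2 \<le> card (non_cycle_edges F)"
proof -
  let ?E = "insert {u, v} F"
  have "?E - {{u, v}} = F" using new by blast
  then obtain C where C: "is_cycle ?E C" "{u, v} \<in> C"
    using cycle_through_edge[of u v ?E] uv reach by auto
  have old: "C - {{u, v}} \<subseteq> non_cycle_edges F"
  proof
    fix f assume f: "f \<in> C - {{u, v}}"
    then have "f \<in> F" using is_cycle_subset[OF C(1)] by blast
    moreover have "\<not> on_cycle F f"
    proof
      assume "on_cycle F f"
      then obtain C' where C': "is_cycle F C'" "f \<in> C'" unfolding on_cycle_def by blast
      then have "C' = C"
        using cycles_edge_disjointD[OF disj _ C(1)] is_cycle_mono[OF C'(1)] f by blast
      then show False using is_cycle_subset[OF C'(1)] C(2) new by blast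
    qed
    ultimately show "f \<in> non_cycle_edges F" unfolding non_cycle_edges_def by blast
  qed
  have finNC: "finite (non_cycle_edges F)" using fin unfolding non_cycle_edges_def by simp
  have "non_cycle_edges ?E \<subseteq> non_cycle_edges F - (C - {{u, v}})"
    using non_cycle_edges_insert_subset C unfolding non_cycle_edges_def on_cycle_def by blast
  then have "card (non_cycle_edges ?E) \<le> card (non_cycle_edges F - (C - {{u, v}}))"
    using finNC by (intro card_mono) auto
  also have "\<dots> = card (non_cycle_edges F) - card (C - {{u, v}})"
    by (rule card_Diff_subset[OF finite_subset[OF old finNC] old])
  finally show ?thesis
    using is_cycle_card[OF C(1)] C(2) card_mono[OF finNC old]
    by (simp add: card_Diff_singleton_if)
qed

lemma card_components_insert_unreachable:
  assumes "finite V" "u \<in> V" "v \<in> V" "\<not> (adj F)\<^sup>*\<^sup>* u v"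
  shows "card (component (insert {u, v} F) ` V) < card (component F ` V)"
proof -
  let ?E = "insert {u, v} F"
  let ?merge = "\<lambda>S. \<Union>(component ?E ` S)"
  have merge: "?merge (component F x) = component ?E x" for x
  proof
    show "component ?E x \<subseteq> ?merge (component F x)"
      unfolding component_def by blast
    show "?merge (component F x) \<subseteq> component ?E x"
      unfolding component_def
      using component_eq[OF rtranclp_adj_mono[of F x _ ?E]] component_def by blast
  qed
  then have img: "component ?E ` V = ?merge ` (component F ` V)"
    by (simp add: image_image)
  have "component F u \<noteq> component F v"
    using assms(4) unfolding component_def by auto
  moreover have "?merge (component F u) = ?merge (component F v)"
    unfolding merge by (simp add: component_eq rtranclp_adj_edge)
  ultimately have "\<not> inj_on ?merge (component F ` V)"
    using assms(2,3) unfolding inj_on_def by blast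
  then have "card (?merge ` (component F ` V)) \<noteq> card (component F ` V)"
    using inj_on_iff_eq_card assms(1) by blast
  moreover have "card (?merge ` (component F ` V)) \<le> card (component F ` V)"
    using assms(1) by (intro card_image_le) simp
  ultimately show ?thesis unfolding img by linarith
qed

text \<open>Equivalently: the cyclomatic number |E| - |V| + (number of components) counts the cycles,
  and each cycle has at least three edges. Adding the edges one at a time, an edge joining two
  components creates at most one non-cycle edge, and an edge closing a cycle destroys at least
  two.\<close>
lemma edge_disjoint_cycles_card_bound:
  assumes "finite V" "simple_graph V E" "cycles_edge_disjoint E"
  shows "2 * card E + 3 * card (component E ` V) + card (non_cycle_edges E) \<le> 3 * card V"
proof -
  have "finite E" using simple_graph_finite assms(1,2) .
  then show ?thesis
    using assms(2,3)
  proof (induction E rule: finite_induct)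
    case empty
    have "card (component {} ` V) = card V"
      by (simp add: component_empty card_image)
    then show ?case by (simp add: non_cycle_edges_def)
  next
    case (insert e F)
    obtain u v where e: "e = {u, v}" "u \<noteq> v" "u \<in> V" "v \<in> V"
      using insert.prems(1) by (blast elim: simple_graph_edgeE)
    have "simple_graph V F" using insert.prems(1) simple_graph_subset by blast
    moreover have "cycles_edge_disjoint F"
      using insert.prems(2) cycles_edge_disjoint_subset by blast
    ultimately have IH: "2 * card F + 3 * card (component F ` V) + card (non_cycle_edges F) \<le> 3 * card V"
      using insert.IH by blast
    show ?case
    proof (cases "(adj F)\<^sup>*\<^sup>* u v")
      case True
      have "card (non_cycle_edges (insert e F)) + 2 \<le> card (non_cycle_edges F)"
        using card_non_cycle_edges_insert_reachable[OF insert.hyps(1) _ _ e(2) True]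
          insert.prems(2) insert.hyps(2) e(1) by blast
      then show ?thesis
        using IH component_insert_reachable[OF True] insert.hyps e(1) by simp
    next
      case False
      then show ?thesis
        using IH card_components_insert_unreachable[OF assms(1) e(3,4) False]
          card_non_cycle_edges_insert_le[OF insert.hyps(1), of e] insert.hyps e(1)
        by simp
    qed
  qed
qed

lemma card_components_connected:
  assumes "connected_graph V E"
  shows "card (component E ` V) = 1"
proof -
  obtain x0 where x0: "x0 \<in> V" using assms unfolding connected_graph_def by blast
  have "component E x = component E x0" if "x \<in> V" for x
    by (rule component_eq[OF connected_graph_reach[OF assms that x0]])
  then have "component E ` V = {component E x0}" using x0 by blast
  then show ?thesis by simp
qed

lemma connected_graph_pendant_pair:
  assumes con: "connected_graph V E" and xy: "{x, y} \<in> E" "deg E x = 1" "deg E y = 1" "x \<in> V"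
  shows "V \<subseteq> {x, y}"
proof -
  have only: "g = {x, y}" if "g \<in> E" "z \<in> g" "z \<in> {x, y}" for g z
    using that xy deg_eq_1E[of E x] deg_eq_1E[of E y] by (metis insertCI insertE singletonD)
  have "z \<in> {x, y}" if "(adj E)\<^sup>*\<^sup>* x z" for z
    using that
  proof (induction rule: rtranclp_induct)
    case (step z w)
    then have "{z, w} = {x, y}" using only[of "{z, w}" z] by (simp add: adj_def)
    then show ?case by blast
  qed simp
  then show ?thesis using connected_graph_reach[OF con xy(4)] by blast
qed

lemma card_leaves_le_non_cycle_edges:
  assumes fin: "finite V" and cac: "cactus V E" and V3: "3 \<le> card V"
  shows "card {v \<in> V. deg E v = 1} \<le> card (non_cycle_edges E)"
proof -
  have sg: "simple_graph V E" and con: "connected_graph V E"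
    using cac unfolding cactus_iff by simp_all
  have fE: "finite E" using simple_graph_finite fin sg by blast
  let ?L = "{v \<in> V. deg E v = 1}"
  define leaf_edge where "leaf_edge x = (THE g. g \<in> E \<and> x \<in> g)" for x
  have leaf_edge: "leaf_edge x \<in> E" "x \<in> leaf_edge x" "\<And>h. h \<in> E \<Longrightarrow> x \<in> h \<Longrightarrow> h = leaf_edge x"
    if x: "x \<in> ?L" for x
  proof -
    have "deg E x = 1" using x by simp
    then obtain g where g: "g \<in> E" "x \<in> g" "\<And>h. h \<in> E \<Longrightarrow> x \<in> h \<Longrightarrow> h = g"
      using deg_eq_1E by blast
    then have "leaf_edge x = g" unfolding leaf_edge_def by (intro the_equality) blast+
    with g show "leaf_edge x \<in> E" "x \<in> leaf_edge x" "\<And>h. h \<in> E \<Longrightarrow> x \<in> h \<Longrightarrow> h = leaf_edge x"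
      by blast+
  qed
  have "leaf_edge x \<in> non_cycle_edges E" if x: "x \<in> ?L" for x
  proof -
    have "\<not> on_cycle E (leaf_edge x)"
    proof
      assume "on_cycle E (leaf_edge x)"
      then obtain C where "is_cycle E C" "leaf_edge x \<in> C" unfolding on_cycle_def by blast
      then have "2 \<le> deg E x" using deg_ge_2_if_on_cycle[OF fE] leaf_edge(2)[OF x] by blast
      then show False using x by simp
    qed
    then show ?thesis using leaf_edge(1)[OF x] unfolding non_cycle_edges_def by blast
  qed
  moreover have "inj_on leaf_edge ?L"
  proof (rule inj_onI, rule ccontr)
    fix x y assume x: "x \<in> ?L" and y: "y \<in> ?L" and same: "leaf_edge x = leaf_edge y" and "x \<noteq> y"
    obtain a b where "leaf_edge x = {a, b}"
      using simple_graph_edgeE[OF sg leaf_edge(1)[OF x]] by metis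
    then have "{x, y} \<in> E"
      using leaf_edge(1,2)[OF x] leaf_edge(2)[OF y] same \<open>x \<noteq> y\<close> by (auto simp: insert_commute)
    then have "V \<subseteq> {x, y}" using connected_graph_pendant_pair[OF con] x y by simp
    then have "card V \<le> card {x, y}" by (intro card_mono) auto
    then show False using V3 card_insert_le_m1[of 2 "{y}" x] by simp
  qed
  moreover have "finite (non_cycle_edges E)" using fE unfolding non_cycle_edges_def by simp
  ultimately show ?thesis by (intro card_inj_on_le) auto
qed

lemma cactus_card_edges_bound:
  assumes "finite V" "cactus V E" "3 \<le> card V"
  shows "2 * card E + card {v \<in> V. deg E v = 1} + 3 \<le> 3 * card V"
  using edge_disjoint_cycles_card_bound[OF assms(1), of E] card_leaves_le_non_cycle_edges[OF assms]
    card_components_connected[of V E] assms(2) unfolding cactus_iff by simp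

lemma acyclic_card_edges_components:
  assumes "finite V" "simple_graph V H" "\<And>C. \<not> is_cycle H C"
  shows "card H + card (component H ` V) \<le> card V"
proof -
  have "cycles_edge_disjoint H" "non_cycle_edges H = H"
    using assms(3) unfolding cycles_edge_disjoint_def non_cycle_edges_def on_cycle_def by auto
  then show ?thesis using edge_disjoint_cycles_card_bound[OF assms(1,2)] by simp
qed

section \<open>Core cacti\<close>

definition cycle_vertices :: "nat set set \<Rightarrow> nat set" where
  "cycle_vertices E = {v. \<exists>C. is_cycle E C \<and> v \<in> \<Union>C}"

lemma core_cactusD:
  assumes "core_cactus V E" "is_bridge V E {u, v}"
    and "has_cycle_in (E - {{u, v}}) (component (E - {{u, v}}) u)"
    and "has_cycle_in (E - {{u, v}}) (component (E - {{u, v}}) v)"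
  shows False
  using assms unfolding core_cactus_def by blast

lemma is_bridge_if_not_on_cycle:
  assumes "{u, v} \<in> E" "u \<noteq> v" "u \<in> V" "v \<in> V" "\<not> on_cycle E {u, v}"
  shows "is_bridge V E {u, v}"
proof -
  have "\<not> connected_graph V (E - {{u, v}})"
  proof
    assume "connected_graph V (E - {{u, v}})"
    then have "(adj (E - {{u, v}}))\<^sup>*\<^sup>* u v" using assms(3,4) by (rule connected_graph_reach)
    then obtain C where "is_cycle E C" "{u, v} \<in> C" using cycle_through_edge assms(1,2) by blast
    then show False using assms(5) unfolding on_cycle_def by blast
  qed
  then show ?thesis unfolding is_bridge_def using assms(1) by simp
qed

lemma has_cycle_in_component_Diff:
  assumes "x \<in> cycle_vertices E" "\<not> on_cycle E g"
  shows "has_cycle_in (E - {g}) (component (E - {g}) x)"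
proof -
  obtain C where C: "is_cycle E C" "x \<in> \<Union>C" using assms(1) unfolding cycle_vertices_def by blast
  then have "g \<notin> C" using assms(2) unfolding on_cycle_def by blast
  then show ?thesis using has_cycle_in_component is_cycle_Diff C by blast
qed

text \<open>Two cycle vertices joined by a path of non-cycle edges would make the first edge of the
  path a bridge with a cycle on either side.\<close>
lemma core_cactus_inj_on_component_non_cycle_edges:
  assumes core: "core_cactus V E"
  shows "inj_on (component (non_cycle_edges E)) (V \<inter> cycle_vertices E)"
proof (rule inj_onI, rule ccontr)
  let ?N = "non_cycle_edges E"
  fix z1 z2
  assume z1: "z1 \<in> V \<inter> cycle_vertices E" and z2: "z2 \<in> V \<inter> cycle_vertices E"
    and same: "component ?N z1 = component ?N z2" and "z1 \<noteq> z2"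
  have sg: "simple_graph V E" using core unfolding core_cactus_def cactus_iff by blast
  have "(adj ?N)\<^sup>*\<^sup>* z1 z2" using same unfolding component_def by auto
  then obtain p where p: "p \<noteq> []" "hd p = z1" "last p = z2" "distinct p" "walk ?N p"
    by (rule rtranclp_adj_path)
  obtain b rest where p_eq: "p = z1 # b # rest"
  proof (cases p)
    case (Cons a q)
    then show ?thesis using that p(2,3) \<open>z1 \<noteq> z2\<close> by (cases q) auto
  qed (use p(1) in simp)
  let ?g = "{z1, b}"
  have gN: "?g \<in> ?N" using p(5) p_eq by simp
  then have gE: "?g \<in> E" and nc: "\<not> on_cycle E ?g" unfolding non_cycle_edges_def by auto
  have "z1 \<noteq> b" using p(4) p_eq by simp
  moreover have "b \<in> V" using simple_graph_edge_subset[OF sg gE] by simp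
  ultimately have bridge: "is_bridge V E ?g"
    using is_bridge_if_not_on_cycle[OF gE _ _ _ nc] z1 by blast
  have side1: "has_cycle_in (E - {?g}) (component (E - {?g}) z1)"
    using has_cycle_in_component_Diff nc z1 by blast
  have "walk ?N (b # rest)" "z1 \<notin> set (b # rest)" using p(4,5) p_eq walk_ConsD by auto
  then have "walk (?N - {?g}) (b # rest)" by (rule walk_Diff) simp
  then have "(adj (?N - {?g}))\<^sup>*\<^sup>* b z2" using walk_reach p(3) p_eq by force
  then have "(adj (E - {?g}))\<^sup>*\<^sup>* b z2"
    by (rule rtranclp_adj_mono) (auto simp: non_cycle_edges_def)
  then have "component (E - {?g}) b = component (E - {?g}) z2" by (rule component_eq)
  moreover have "has_cycle_in (E - {?g}) (component (E - {?g}) z2)"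
    using has_cycle_in_component_Diff nc z2 by blast
  ultimately have side2: "has_cycle_in (E - {?g}) (component (E - {?g}) b)" by simp
  show False using core_cactusD[OF core bridge side1 side2] .
qed

lemma even_card_cycle_edges_at:
  assumes fin: "finite E" and disj: "cycles_edge_disjoint E"
  shows "even (card {g \<in> E. v \<in> g \<and> on_cycle E g})"
proof -
  define CC where "CC = {C. is_cycle E C \<and> v \<in> \<Union>C}"
  have "finite CC"
    using fin is_cycle_subset unfolding CC_def by (auto intro: finite_subset[of _ "Pow E"])
  moreover have "{g \<in> E. v \<in> g \<and> on_cycle E g} = (\<Union>C\<in>CC. {g \<in> C. v \<in> g})"
    unfolding CC_def on_cycle_def using is_cycle_subset by blast
  ultimately have "card {g \<in> E. v \<in> g \<and> on_cycle E g} = (\<Sum>C\<in>CC. card {g \<in> C. v \<in> g})"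
  proof (simp only:, intro card_UN_disjoint ballI impI)
    show "finite {g \<in> C. v \<in> g}" if "C \<in> CC" for C
      using that is_cycle_subset fin finite_subset unfolding CC_def by fastforce
    show "{g \<in> C1. v \<in> g} \<inter> {g \<in> C2. v \<in> g} = {}" if "C1 \<in> CC" "C2 \<in> CC" "C1 \<noteq> C2" for C1 C2
      using that cycles_edge_disjointD[OF disj] unfolding CC_def by blast
  qed
  also have "\<dots> = (\<Sum>C\<in>CC. 2)"
    using is_cycle_card_at unfolding CC_def by (intro sum.cong) auto
  finally show ?thesis by simp
qed

lemma deg_eq_non_cycle_edges_plus:
  assumes "finite E"
  shows "deg E v = deg (non_cycle_edges E) v + card {g \<in> E. v \<in> g \<and> on_cycle E g}"
proof -
  have "{g \<in> E. v \<in> g} = {g \<in> non_cycle_edges E. v \<in> g} \<union> {g \<in> E. v \<in> g \<and> on_cycle E g}"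
    unfolding non_cycle_edges_def by blast
  moreover have "{g \<in> non_cycle_edges E. v \<in> g} \<inter> {g \<in> E. v \<in> g \<and> on_cycle E g} = {}"
    unfolding non_cycle_edges_def by blast
  moreover have "finite (non_cycle_edges E)" using assms unfolding non_cycle_edges_def by simp
  ultimately show ?thesis unfolding deg_def using assms by (simp add: card_Un_disjoint)
qed

lemma core_cactus_card_non_cycle_edges:
  assumes fin: "finite V" and core: "core_cactus V E"
  shows "card (non_cycle_edges E) \<le> card (V - cycle_vertices E)"
proof -
  let ?N = "non_cycle_edges E"
  have sg: "simple_graph V E" using core unfolding core_cactus_def cactus_iff by simp
  have sN: "simple_graph V ?N" using simple_graph_subset[OF sg non_cycle_edges_subset] .
  have "\<not> is_cycle ?N C" for C
  proof
    assume C: "is_cycle ?N C"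
    then obtain g where "g \<in> C" using is_cycle_card by fastforce
    moreover have "is_cycle E C" using C is_cycle_mono unfolding non_cycle_edges_def by blast
    ultimately show False using C is_cycle_subset unfolding non_cycle_edges_def on_cycle_def by blast
  qed
  then have forest: "card ?N + card (component ?N ` V) \<le> card V"
    using acyclic_card_edges_components[OF fin sN] by blast
  have "card (V \<inter> cycle_vertices E) = card (component ?N ` (V \<inter> cycle_vertices E))"
    using core_cactus_inj_on_component_non_cycle_edges[OF core] by (simp add: card_image)
  also have "\<dots> \<le> card (component ?N ` V)"
    using fin by (intro card_mono) auto
  finally show ?thesis
    using forest card_Diff_subset_Int[of V "cycle_vertices E"] fin by simp
qed

text \<open>Counting degrees in the forest of non-cycle edges vertex by vertex, a vertex off the cycles
  contributes at least two, minus one if it is a leaf, plus one if its degree is odd and at least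
  three; a cycle vertex of odd degree still contributes one, because it lies on an even number of
  cycle edges.\<close>
lemma core_cactus_odd_le_leaves:
  assumes fin: "finite V" and core: "core_cactus V E" and pos: "\<forall>v\<in>V. 1 \<le> deg E v"
  shows "card {v \<in> V. odd (deg E v) \<and> 1 < deg E v} \<le> card {v \<in> V. deg E v = 1}"
proof -
  have sg: "simple_graph V E" and disj: "cycles_edge_disjoint E"
    using core unfolding core_cactus_def cactus_iff by simp_all
  have fE: "finite E" using simple_graph_finite fin sg by blast
  let ?N = "non_cycle_edges E"
  let ?O = "{v \<in> V. odd (deg E v) \<and> 1 < deg E v}"
  let ?L = "{v \<in> V. deg E v = 1}"
  define W where "W = V - cycle_vertices E"
  have sN: "simple_graph V ?N" using simple_graph_subset[OF sg non_cycle_edges_subset] .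
  have vertex: "2 * of_bool (v \<in> W) + of_bool (v \<in> ?O) \<le> deg ?N v + of_bool (v \<in> ?L)"
    if v: "v \<in> V" for v
  proof -
    let ?c = "card {g \<in> E. v \<in> g \<and> on_cycle E g}"
    have split: "deg E v = deg ?N v + ?c" using deg_eq_non_cycle_edges_plus[OF fE] .
    have "even ?c" using even_card_cycle_edges_at[OF fE disj] .
    show ?thesis
    proof (cases "v \<in> W")
      case True
      have "{g \<in> E. v \<in> g \<and> on_cycle E g} = {}"
        using True v unfolding W_def cycle_vertices_def on_cycle_def by blast
      then have "?c = 0" by (simp only: card.empty)
      then have "deg ?N v = deg E v" using split by simp
      then show ?thesis using True pos v by (auto; presburger)
    next
      case False
      then have "2 \<le> deg E v"
        using v deg_ge_2_if_on_cycle[OF fE] unfolding W_def cycle_vertices_def by blast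
      moreover have "odd (deg E v) \<Longrightarrow> 0 < deg ?N v"
        using split \<open>even ?c\<close> by (auto intro: odd_pos)
      ultimately show ?thesis using False by auto
    qed
  qed
  have "2 * card W + card ?O = (\<Sum>v\<in>V. 2 * of_bool (v \<in> W) + of_bool (v \<in> ?O))"
    using fin by (simp add: sum.distrib sum_distrib_left[symmetric] W_def Int_def set_diff_eq)
  also have "\<dots> \<le> (\<Sum>v\<in>V. deg ?N v + of_bool (v \<in> ?L))"
    using vertex by (rule sum_mono)
  also have "\<dots> = 2 * card ?N + card ?L"
    using fin sum_deg_eq_twice_card[OF fin sN] by (simp add: sum.distrib Int_def)
  finally show ?thesis using core_cactus_card_non_cycle_edges[OF fin core] unfolding W_def by linarith
qed

definition cycle_or_pendant_graph :: "nat set \<Rightarrow> nat set set \<Rightarrow> bool" where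
  "cycle_or_pendant_graph V E \<longleftrightarrow> simple_graph V E \<and> connected_graph V E \<and> cycles_edge_disjoint E \<and>
     (\<forall>g\<in>E. on_cycle E g \<or> (\<exists>x\<in>g. deg E x = 1))"

lemma not_is_bridge_if_on_cycle:
  assumes con: "connected_graph V E" and "on_cycle E g"
  shows "\<not> is_bridge V E g"
proof -
  obtain vs i where vs: "distinct vs" "3 \<le> length vs" "cycle_edges vs \<subseteq> E"
    and i: "i < length vs" "g = cycle_edge vs i"
    using assms(2) unfolding on_cycle_def is_cycle_def cycle_edges_eq_image by blast
  have sub: "cycle_edges vs - {g} \<subseteq> E - {g}" using vs(3) by blast
  have "(adj (E - {g}))\<^sup>*\<^sup>* a b" if "(adj E)\<^sup>*\<^sup>* a b" for a b
    using that
  proof (induction rule: rtranclp_induct)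
    case (step y z)
    have "(adj (E - {g}))\<^sup>*\<^sup>* y z"
    proof (cases "{y, z} = g")
      case True
      then have "y \<in> set vs" "z \<in> set vs" using cycle_edge_subset[OF i(1)] i(2) by auto
      then show ?thesis
        using cycle_minus_edge_reach[OF vs(1,2) i(1)] i(2) rtranclp_adj_mono[OF _ sub] by blast
    next
      case False
      then show ?thesis using step(2) by (simp add: adj_def rtranclp_adj_edge)
    qed
    with step(3) show ?case by (rule rtranclp_trans)
  qed simp
  then have "connected_graph V (E - {g})" using con unfolding connected_graph_def by blast
  then show ?thesis unfolding is_bridge_def by simp
qed

lemma component_Diff_pendant_edge:
  assumes "deg E x = 1" "g \<in> E" "x \<in> g"
  shows "component (E - {g}) x = {x}"
proof -
  obtain h where h: "h \<in> E" "x \<in> h" "\<And>k. k \<in> E \<Longrightarrow> x \<in> k \<Longrightarrow> k = h"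
    using deg_eq_1E[OF assms(1)] by blast
  have "y = x" if "(adj (E - {g}))\<^sup>*\<^sup>* x y" for y
    using that
  proof (induction rule: rtranclp_induct)
    case (step y z)
    then have "{x, z} \<in> E" "{x, z} \<noteq> g" by (auto simp: adj_def)
    then show ?case using h(3)[of "{x, z}"] h(3)[OF assms(2,3)] by blast
  qed simp
  then show ?thesis unfolding component_def by auto
qed

lemma not_has_cycle_in_singleton: "\<not> has_cycle_in E {x}"
proof
  assume "has_cycle_in E {x}"
  then obtain vs where vs: "distinct vs" "3 \<le> length vs" "\<Union>(cycle_edges vs) \<subseteq> {x}"
    unfolding has_cycle_in_def is_cycle_def by blast
  then have "card (set vs) \<le> card {x}" using Union_cycle_edges[OF vs(2)] by (intro card_mono) auto
  then show False using vs(1,2) distinct_card[of vs] by simp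
qed

lemma core_cactus_if_cycle_or_pendant_graph:
  assumes "cycle_or_pendant_graph V E"
  shows "core_cactus V E"
proof -
  have con: "connected_graph V E" and cac: "cactus V E"
    and cyc_or_pend: "\<forall>g\<in>E. on_cycle E g \<or> (\<exists>x\<in>g. deg E x = 1)"
    using assms unfolding cycle_or_pendant_graph_def cactus_iff by auto
  have False if bridge: "is_bridge V E {u, v}"
    and side_u: "has_cycle_in (E - {{u, v}}) (component (E - {{u, v}}) u)"
    and side_v: "has_cycle_in (E - {{u, v}}) (component (E - {{u, v}}) v)" for u v
  proof -
    have gE: "{u, v} \<in> E" using bridge unfolding is_bridge_def by blast
    have "\<not> on_cycle E {u, v}" using not_is_bridge_if_on_cycle[OF con] bridge by blast
    then obtain x where "x \<in> {u, v}" "deg E x = 1" using cyc_or_pend gE by blast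
    then have "has_cycle_in (E - {{u, v}}) {x}"
      using component_Diff_pendant_edge[OF _ gE] side_u side_v by auto
    then show False using not_has_cycle_in_singleton by blast
  qed
  then show ?thesis unfolding core_cactus_def using cac by blast
qed

lemma cycle_or_pendant_graph_cycle:
  assumes "distinct vs" "3 \<le> length vs"
  shows "cycle_or_pendant_graph (set vs) (cycle_edges vs)"
proof -
  let ?C = "cycle_edges vs"
  have self: "is_cycle ?C ?C" unfolding is_cycle_def using assms by blast
  have "C = ?C" if "is_cycle ?C C" for C
    using that cycle_edges_subset_imp_eq[OF _ _ assms] unfolding is_cycle_def by blast
  then have "cycles_edge_disjoint ?C" by (blast intro: cycles_edge_disjointI)
  moreover have "connected_graph (set vs) ?C"
    unfolding connected_graph_def using cycle_reach[OF assms] assms(2) by auto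
  ultimately show ?thesis
    unfolding cycle_or_pendant_graph_def on_cycle_def
    using simple_graph_cycle_edges[OF assms] self by blast
qed

lemma deg_cycle_edges: "distinct vs \<Longrightarrow> 3 \<le> length vs \<Longrightarrow> v \<in> set vs \<Longrightarrow> deg (cycle_edges vs) v = 2"
  unfolding deg_def by (rule card_cycle_edges_at)

lemma deg_Un_not_in: "x \<notin> \<Union>F \<Longrightarrow> deg (E \<union> F) x = deg E x"
  unfolding deg_def by (metis (lifting) UnE UnionI Un_iff)

text \<open>Old pendant edges stay pendant because their leaf is not w, which has degree at least two.\<close>
lemma cycle_or_pendant_graph_attach:
  assumes G: "cycle_or_pendant_graph V E" and w: "w \<in> V" "2 \<le> deg E w"
    and new: "\<Union>F \<inter> V \<subseteq> {w}" and reach_new: "\<And>x. x \<in> X \<Longrightarrow> (adj F)\<^sup>*\<^sup>* w x"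
    and sg: "simple_graph (V \<union> X) (E \<union> F)" and disj: "cycles_edge_disjoint (E \<union> F)"
    and F: "\<forall>g\<in>F. on_cycle (E \<union> F) g \<or> (\<exists>x\<in>g. deg (E \<union> F) x = 1)"
  shows "cycle_or_pendant_graph (V \<union> X) (E \<union> F)"
proof -
  have sgE: "simple_graph V E" and con: "connected_graph V E"
    and E: "\<forall>g\<in>E. on_cycle E g \<or> (\<exists>x\<in>g. deg E x = 1)"
    using G unfolding cycle_or_pendant_graph_def by auto
  have reach: "(adj (E \<union> F))\<^sup>*\<^sup>* w x" if "x \<in> V \<union> X" for x
    using that connected_graph_reach[OF con w(1)] reach_new rtranclp_adj_mono by blast
  then have "connected_graph (V \<union> X) (E \<union> F)"
    unfolding connected_graph_def using w(1) by (blast intro: rtranclp_trans rtranclp_adj_sym)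
  moreover have "on_cycle (E \<union> F) g \<or> (\<exists>x\<in>g. deg (E \<union> F) x = 1)" if "g \<in> E" for g
  proof -
    have "on_cycle E g \<or> (\<exists>x\<in>g. deg E x = 1)" using E that by blast
    moreover have "deg (E \<union> F) x = deg E x" if "x \<in> g" "deg E x = 1" for x
      using that simple_graph_edge_subset[OF sgE \<open>g \<in> E\<close>] new w(2)
      by (intro deg_Un_not_in) auto
    ultimately show ?thesis using on_cycle_mono[of E g "E \<union> F"] by auto
  qed
  ultimately show ?thesis
    using sg disj F unfolding cycle_or_pendant_graph_def by blast
qed

lemma deg_Un_disjoint:
  assumes "finite E" "finite F" "E \<inter> F = {}"
  shows "deg (E \<union> F) v = deg E v + deg F v"
proof -
  have "card ({e \<in> E. v \<in> e} \<union> {e \<in> F. v \<in> e}) = card {e \<in> E. v \<in> e} + card {e \<in> F. v \<in> e}"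
    using assms by (intro card_Un_disjoint) auto
  moreover have "{e \<in> E \<union> F. v \<in> e} = {e \<in> E. v \<in> e} \<union> {e \<in> F. v \<in> e}" by blast
  ultimately show ?thesis unfolding deg_def by simp
qed

lemma simple_graph_Un:
  assumes "simple_graph V E" "simple_graph W F"
  shows "simple_graph (V \<union> W) (E \<union> F)"
  unfolding simple_graph_def
proof
  fix e assume "e \<in> E \<union> F"
  then obtain u v where "e = {u, v}" "u \<noteq> v" "u \<in> V \<union> W" "v \<in> V \<union> W"
    using assms by (auto elim!: simple_graph_edgeE)
  then show "\<exists>u v. e = {u, v} \<and> u \<noteq> v \<and> u \<in> V \<union> W \<and> v \<in> V \<union> W" by blast
qed

lemma simple_graph_single_edge: "u \<noteq> v \<Longrightarrow> simple_graph {u, v} {{u, v}}"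
  unfolding simple_graph_def by blast

lemma deg_eq_0_if_not_in: "x \<notin> \<Union>E \<Longrightarrow> deg E x = 0"
proof -
  assume "x \<notin> \<Union>E"
  then have "{e \<in> E. x \<in> e} = {}" by blast
  then show ?thesis unfolding deg_def by (simp only: card.empty)
qed

lemma edges_at_subset_cycle:
  assumes "finite E" "is_cycle E C" "z \<in> \<Union>C" "deg E z = 2"
  shows "{g \<in> E. z \<in> g} \<subseteq> C"
proof -
  have "{g \<in> C. z \<in> g} \<subseteq> {g \<in> E. z \<in> g}" using is_cycle_subset[OF assms(2)] by blast
  moreover have "card {g \<in> C. z \<in> g} = card {g \<in> E. z \<in> g}"
    using is_cycle_card_at[OF assms(2,3)] assms(4) unfolding deg_def by simp
  ultimately have "{g \<in> C. z \<in> g} = {g \<in> E. z \<in> g}"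
    using assms(1) by (simp add: card_subset_eq)
  then show ?thesis by blast
qed

lemma cycle_or_pendant_graph_add_pendant:
  assumes "finite V" and G: "cycle_or_pendant_graph V E" and w: "w \<in> V" "2 \<le> deg E w"
    and x: "x \<notin> V"
  shows "cycle_or_pendant_graph (V \<union> {x}) (E \<union> {{w, x}})"
    and "deg (E \<union> {{w, x}}) v = (if v = x then 1 else if v = w then deg E v + 1 else deg E v)"
proof -
  let ?E = "E \<union> {{w, x}}"
  have sg: "simple_graph V E" and disj: "cycles_edge_disjoint E"
    using G unfolding cycle_or_pendant_graph_def by auto
  have fE: "finite E" using simple_graph_finite[OF assms(1) sg] .
  have x_old: "x \<notin> \<Union>E" using simple_graph_edge_subset[OF sg] x by blast
  have wx: "w \<noteq> x" using w x by blast
  show deg: "deg ?E v = (if v = x then 1 else if v = w then deg E v + 1 else deg E v)" for v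
  proof -
    have "deg ?E v = deg E v + deg {{w, x}} v"
      using fE x_old by (intro deg_Un_disjoint) auto
    moreover have "deg E x = 0" using x_old by (rule deg_eq_0_if_not_in)
    moreover have "{e \<in> {{w, x}}. v \<in> e} = (if v = w \<or> v = x then {{w, x}} else {})" by auto
    then have "deg {{w, x}} v = (if v = w \<or> v = x then 1 else 0)" unfolding deg_def by simp
    ultimately show ?thesis using wx by auto
  qed
  have old_cycle: "is_cycle E C" if C: "is_cycle ?E C" for C
  proof -
    have "x \<notin> \<Union>C" using deg_ge_2_if_on_cycle[of ?E C x] C fE deg[of x] by auto
    then have "C \<subseteq> E" using is_cycle_subset[OF C] by blast
    then show ?thesis using C unfolding is_cycle_def by blast
  qed
  have disj': "cycles_edge_disjoint ?E"
  proof (rule cycles_edge_disjointI)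
    fix C1 C2 g assume "is_cycle ?E C1" "is_cycle ?E C2" "g \<in> C1" "g \<in> C2"
    then show "C1 = C2" using old_cycle cycles_edge_disjointD[OF disj] by blast
  qed
  have "simple_graph (V \<union> {w, x}) ?E"
    using simple_graph_Un[OF sg simple_graph_single_edge[OF wx]] .
  moreover have "V \<union> {w, x} = V \<union> {x}" using w by blast
  ultimately have sg': "simple_graph (V \<union> {x}) ?E" by simp
  have "\<Union>{{w, x}} \<inter> V \<subseteq> {w}" using x by blast
  moreover have "(adj {{w, x}})\<^sup>*\<^sup>* w z" if "z \<in> {x}" for z
    using that by (simp add: rtranclp_adj_edge)
  moreover have "\<forall>g\<in>{{w, x}}. on_cycle ?E g \<or> (\<exists>z\<in>g. deg ?E z = 1)" using deg by simp
  ultimately show "cycle_or_pendant_graph (V \<union> {x}) ?E"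
    using cycle_or_pendant_graph_attach[OF G w, of "{{w, x}}" "{x}"] sg' disj' by blast
qed

lemma deg_Un_triangle:
  assumes fE: "finite E" and new: "x \<notin> \<Union>E" "y \<notin> \<Union>E" and dst: "distinct [w, x, y]"
  shows "deg (E \<union> cycle_edges [w, x, y]) v =
    (if v = x \<or> v = y then 2 else if v = w then deg E v + 2 else deg E v)"
proof -
  let ?T = "cycle_edges [w, x, y]"
  have tri: "3 \<le> length [w, x, y]" by simp
  have T: "?T = {{w, x}, {x, y}, {y, w}}" by (rule cycle_edges_triangle)
  have "deg (E \<union> ?T) v = deg E v + deg ?T v"
    using fE new by (intro deg_Un_disjoint) (auto simp: T)
  moreover have "deg E x = 0" "deg E y = 0" using new deg_eq_0_if_not_in by blast+
  moreover have "deg ?T v = 2" if "v \<in> {w, x, y}" using deg_cycle_edges[OF dst tri] that by simp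
  moreover have "deg ?T v = 0" if "v \<notin> {w, x, y}" using that unfolding T deg_def by auto
  ultimately show ?thesis by auto
qed

text \<open>A cycle through x or y contains both edges at that vertex, hence the whole triangle.\<close>
lemma is_cycle_Un_triangle:
  assumes fE: "finite E" and new: "x \<notin> \<Union>E" "y \<notin> \<Union>E" and dst: "distinct [w, x, y]"
    and C: "is_cycle (E \<union> cycle_edges [w, x, y]) C"
  shows "C = cycle_edges [w, x, y] \<or> is_cycle E C"
proof (cases "C \<inter> cycle_edges [w, x, y] = {}")
  case True
  then show ?thesis using C is_cycle_subset[OF C] unfolding is_cycle_def by blast
next
  case False
  let ?T = "cycle_edges [w, x, y]"
  have T: "?T = {{w, x}, {x, y}, {y, w}}" by (rule cycle_edges_triangle)
  have at: "{g \<in> E \<union> ?T. z \<in> g} \<subseteq> C" if z: "z \<in> {x, y}" "z \<in> \<Union>C" for z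
  proof (rule edges_at_subset_cycle[OF _ C z(2)])
    show "finite (E \<union> ?T)" using fE by (simp add: T)
    show "deg (E \<union> ?T) z = 2" using deg_Un_triangle[OF fE new dst, of z] z(1) by auto
  qed
  have "x \<in> \<Union>C \<or> y \<in> \<Union>C" using False unfolding T by blast
  then have "?T \<subseteq> C" using at[of x] at[of y] unfolding T by blast
  moreover have "3 \<le> length [w, x, y]" by simp
  ultimately show ?thesis
    using cycle_edges_subset_imp_eq[OF dst] C unfolding is_cycle_def by metis
qed

lemma cycle_or_pendant_graph_add_triangle:
  assumes "finite V" and G: "cycle_or_pendant_graph V E" and w: "w \<in> V" "2 \<le> deg E w"
    and xy: "x \<notin> V" "y \<notin> V" "x \<noteq> y"
  shows "cycle_or_pendant_graph (V \<union> {x, y}) (E \<union> cycle_edges [w, x, y])"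
    and "deg (E \<union> cycle_edges [w, x, y]) v =
      (if v = x \<or> v = y then 2 else if v = w then deg E v + 2 else deg E v)"
proof -
  let ?T = "cycle_edges [w, x, y]"
  let ?E = "E \<union> ?T"
  have sg: "simple_graph V E" and disj: "cycles_edge_disjoint E"
    using G unfolding cycle_or_pendant_graph_def by auto
  have fE: "finite E" using simple_graph_finite[OF assms(1) sg] .
  have new: "x \<notin> \<Union>E" "y \<notin> \<Union>E" using simple_graph_edge_subset[OF sg] xy by blast+
  have tri: "distinct [w, x, y]" "3 \<le> length [w, x, y]" using w xy by auto
  have T: "?T = {{w, x}, {x, y}, {y, w}}" by (rule cycle_edges_triangle)
  show "deg ?E v = (if v = x \<or> v = y then 2 else if v = w then deg E v + 2 else deg E v)"
    by (rule deg_Un_triangle[OF fE new tri(1)])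
  have disj': "cycles_edge_disjoint ?E"
  proof (rule cycles_edge_disjointI)
    fix C1 C2 g assume "is_cycle ?E C1" "is_cycle ?E C2" "g \<in> C1" "g \<in> C2"
    moreover have "E \<inter> ?T = {}" using new unfolding T by blast
    ultimately show "C1 = C2"
      using is_cycle_Un_triangle[OF fE new tri(1)] cycles_edge_disjointD[OF disj] is_cycle_subset
      by blast
  qed
  have "simple_graph (V \<union> set [w, x, y]) ?E"
    using simple_graph_Un[OF sg simple_graph_cycle_edges[OF tri]] .
  moreover have "V \<union> set [w, x, y] = V \<union> {x, y}" using w by auto
  ultimately have sg': "simple_graph (V \<union> {x, y}) ?E" by simp
  have "\<Union>?T \<inter> V \<subseteq> {w}" using xy unfolding T by blast
  moreover have "(adj ?T)\<^sup>*\<^sup>* w z" if "z \<in> {x, y}" for z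
    using cycle_reach[OF tri] that by simp
  moreover have "\<forall>g\<in>?T. on_cycle ?E g \<or> (\<exists>z\<in>g. deg ?E z = 1)"
    using tri unfolding on_cycle_def is_cycle_def by blast
  ultimately show "cycle_or_pendant_graph (V \<union> {x, y}) ?E"
    using cycle_or_pendant_graph_attach[OF G w, of ?T "{x, y}"] sg' disj' by blast
qed

section \<open>Realizing degree sequences\<close>

text \<open>The conditions of the theorem on a vertex set V, except that the degree sum is only required
  to be at least 2|V|, so that the all-twos sequence of a single cycle serves as base case.\<close>
definition core_cactus_admissible :: "nat set \<Rightarrow> (nat \<Rightarrow> nat) \<Rightarrow> bool" where
  "core_cactus_admissible V d \<longleftrightarrow> finite V \<and> (\<forall>v\<in>V. 1 \<le> d v) \<and> even (\<Sum>v\<in>V. d v) \<and>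
     2 * card V \<le> (\<Sum>v\<in>V. d v) \<and>
     card {v \<in> V. odd (d v) \<and> 1 < d v} \<le> card {v \<in> V. d v = 1} \<and>
     (\<Sum>v\<in>V. d v) + card {v \<in> V. d v = 1} + 3 \<le> 3 * card V"

lemma sum_fun_upd_add:
  fixes d :: "'a \<Rightarrow> nat"
  assumes "finite A" "w \<in> A"
  shows "(\<Sum>v\<in>A. (d(w := c)) v) + d w = (\<Sum>v\<in>A. d v) + c"
proof -
  have "(\<Sum>v\<in>A - {w}. (d(w := c)) v) = (\<Sum>v\<in>A - {w}. d v)" by (rule sum.cong) auto
  then have "(\<Sum>v\<in>A. (d(w := c)) v) = c + (\<Sum>v\<in>A - {w}. d v)"
    using sum.remove[OF assms, of "d(w := c)"] by simp
  moreover have "(\<Sum>v\<in>A. d v) = d w + (\<Sum>v\<in>A - {w}. d v)" by (rule sum.remove[OF assms])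
  ultimately show ?thesis by simp
qed

lemma even_card_odd_add_card_leaves:
  fixes d :: "'a \<Rightarrow> nat"
  assumes "finite V" "even (\<Sum>v\<in>V. d v)"
  shows "even (card {v \<in> V. odd (d v) \<and> 1 < d v} + card {v \<in> V. d v = 1})"
proof -
  have "{v \<in> V. odd (d v)} = {v \<in> V. odd (d v) \<and> 1 < d v} \<union> {v \<in> V. d v = 1}"
    by (auto dest: odd_pos)
  moreover have "card ({v \<in> V. odd (d v) \<and> 1 < d v} \<union> {v \<in> V. d v = 1}) =
      card {v \<in> V. odd (d v) \<and> 1 < d v} + card {v \<in> V. d v = 1}"
    using assms(1) by (intro card_Un_disjoint) auto
  moreover have "even (card {v \<in> V. odd (d v)})" using assms by (simp add: even_sum_iff)
  ultimately show ?thesis by simp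
qed

lemma core_cactus_admissible_no_leaf_even:
  assumes "core_cactus_admissible V d" "\<forall>v\<in>V. d v \<noteq> 1" "v \<in> V"
  shows "even (d v)" "2 \<le> d v"
proof -
  have no_leaves: "{v \<in> V. d v = 1} = {}" using assms(2) by blast
  have "card {v \<in> V. odd (d v) \<and> 1 < d v} = 0"
    using assms(1) unfolding core_cactus_admissible_def no_leaves by simp
  then have "{v \<in> V. odd (d v) \<and> 1 < d v} = {}"
    using assms(1) unfolding core_cactus_admissible_def by simp
  then show "even (d v)" "2 \<le> d v"
    using assms unfolding core_cactus_admissible_def by (fastforce dest: odd_pos)+
qed

lemma core_cactus_admissible_remove_leaf:
  assumes adm: "core_cactus_admissible V d" and x: "x \<in> V" "d x = 1" and w: "w \<in> V" "3 \<le> d w"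
    and odd_w: "odd (d w) \<or> {v \<in> V. odd (d v) \<and> 1 < d v} = {}"
  shows "core_cactus_admissible (V - {x}) (d(w := d w - 1))"
proof -
  define V' where "V' = V - {x}"
  define d' where "d' = d(w := d w - 1)"
  let ?S = "\<Sum>v\<in>V. d v" and ?S' = "\<Sum>v\<in>V'. d' v"
  let ?L = "{v \<in> V. d v = 1}" and ?L' = "{v \<in> V'. d' v = 1}"
  let ?O = "{v \<in> V. odd (d v) \<and> 1 < d v}" and ?O' = "{v \<in> V'. odd (d' v) \<and> 1 < d' v}"
  have fin: "finite V" and pos: "\<forall>v\<in>V. 1 \<le> d v" and ev: "even ?S" and lo: "2 * card V \<le> ?S"
    and OL: "card ?O \<le> card ?L" and up: "?S + card ?L + 3 \<le> 3 * card V"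
    using adm unfolding core_cactus_admissible_def by auto
  have wV': "w \<in> V'" using w x unfolding V'_def by auto
  have cV': "card V' = card V - 1" using fin x(1) unfolding V'_def by simp
  have "?S = 1 + (\<Sum>v\<in>V'. d v)" using sum.remove[OF fin x(1), of d] x(2) unfolding V'_def by simp
  moreover have "?S' + d w = (\<Sum>v\<in>V'. d v) + (d w - 1)"
    unfolding d'_def using fin wV' unfolding V'_def by (intro sum_fun_upd_add) auto
  ultimately have S': "?S' + 2 = ?S" using w(2) by linarith
  have L': "?L' = ?L - {x}" using w(2) unfolding V'_def d'_def by auto
  have fL: "finite ?L" "finite ?O" using fin by simp_all
  have cL: "1 \<le> card ?L" using x fL(1) by (metis (mono_tags, lifting) One_nat_def Suc_leI
        card_gt_0_iff empty_iff mem_Collect_eq)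
  have cL': "card ?L' = card ?L - 1" unfolding L' using x fL(1) by simp
  have "card ?O' \<le> card ?L'"
  proof (cases "odd (d w)")
    case True
    then have "?O' = ?O - {w}" using w(2) x(2) unfolding V'_def d'_def by auto
    moreover have "w \<in> ?O" using True w by auto
    ultimately show ?thesis using fL(2) cL' OL by simp
  next
    case False
    then have O_empty: "?O = {}" using odd_w by blast
    \<comment> \<open>then the number of leaves is even and positive, hence at least two\<close>
    have "even (card ?L)" using even_card_odd_add_card_leaves[OF fin ev] unfolding O_empty by simp
    then have "2 \<le> card ?L" using cL by presburger
    moreover have "?O' \<subseteq> {w}" using O_empty unfolding V'_def d'_def by auto
    then have "card ?O' \<le> 1" using card_mono[of "{w}"] by simp
    ultimately show ?thesis using cL' by linarith
  qed
  moreover have "\<forall>v\<in>V'. 1 \<le> d' v" using pos w(2) unfolding V'_def d'_def by auto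
  moreover have "even ?S'" using S' ev by (metis even_add even_numeral)
  moreover have "2 * card V' \<le> ?S'" using S' lo cV' by linarith
  moreover have "?S' + card ?L' + 3 \<le> 3 * card V'" using S' up cV' cL' cL by linarith
  ultimately show ?thesis using fin unfolding core_cactus_admissible_def V'_def d'_def by simp
qed

lemma core_cactus_admissible_remove_triangle:
  assumes adm: "core_cactus_admissible V d" and no_leaf: "\<forall>v\<in>V. d v \<noteq> 1"
    and xy: "x \<in> V" "y \<in> V" "x \<noteq> y" "d x = 2" "d y = 2" and w: "w \<in> V" "4 \<le> d w"
  shows "core_cactus_admissible (V - {x, y}) (d(w := d w - 2))"
proof -
  define V' where "V' = V - {x, y}"
  define d' where "d' = d(w := d w - 2)"
  let ?S = "\<Sum>v\<in>V. d v" and ?S' = "\<Sum>v\<in>V'. d' v"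
  have fin: "finite V" and ev: "even ?S" and up: "?S + card {v \<in> V. d v = 1} + 3 \<le> 3 * card V"
    using adm unfolding core_cactus_admissible_def by auto
  have even_ge_2: "even (d v)" "2 \<le> d v" if "v \<in> V" for v
    using core_cactus_admissible_no_leaf_even[OF adm no_leaf that] by auto
  have wV': "w \<in> V'" using w xy unfolding V'_def by auto
  have cV': "card V' = card V - 2" using fin xy unfolding V'_def by (simp add: card_Diff_subset)
  have "?S = (\<Sum>v\<in>V'. d v) + (\<Sum>v\<in>{x, y}. d v)"
    unfolding V'_def using fin xy by (intro sum.subset_diff) auto
  moreover have "?S' + d w = (\<Sum>v\<in>V'. d v) + (d w - 2)"
    unfolding d'_def using fin wV' unfolding V'_def by (intro sum_fun_upd_add) auto
  ultimately have S': "?S' + 6 = ?S" using xy w(2) by simp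
  have "2 * (card V - 1) \<le> (\<Sum>v\<in>V - {w}. d v)"
    using sum_mono[of "V - {w}" "\<lambda>_. 2" d] even_ge_2(2) fin w(1) by simp
  then have lo: "2 * card V + 2 \<le> ?S"
    using sum.remove[OF fin w(1), of d] w fin by (cases "card V") auto
  have "{v \<in> V. d v = 1} = {}" using no_leaf by blast
  then have up': "?S + 3 \<le> 3 * card V" using up by simp
  have "\<forall>v\<in>V'. even (d' v) \<and> 2 \<le> d' v"
    using even_ge_2 w(2) unfolding V'_def d'_def by auto
  then have L': "{v \<in> V'. d' v = 1} = {}" and O': "{v \<in> V'. odd (d' v) \<and> 1 < d' v} = {}"
    and pos': "\<forall>v\<in>V'. 1 \<le> d' v" by auto
  have "even ?S'" using S' ev by (metis even_add even_numeral)
  moreover have "finite V'" using fin unfolding V'_def by simp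
  moreover have "2 \<le> card V" using card_mono[OF fin, of "{x, y}"] xy by simp
  then have "2 * card V' \<le> ?S'" "?S' + 3 \<le> 3 * card V'" using S' lo up' cV' by linarith+
  ultimately have "core_cactus_admissible V' d'"
    unfolding core_cactus_admissible_def L' O' using pos' by simp
  then show ?thesis unfolding V'_def d'_def .
qed

lemma core_cactus_admissible_leaf_anchor:
  assumes adm: "core_cactus_admissible V d" and x: "x \<in> V" "d x = 1"
  obtains w where "w \<in> V" "3 \<le> d w" "odd (d w) \<or> {v \<in> V. odd (d v) \<and> 1 < d v} = {}"
proof (cases "{v \<in> V. odd (d v) \<and> 1 < d v} = {}")
  case False
  then obtain w where "w \<in> V" "odd (d w)" "1 < d w" by blast
  moreover from this have "3 \<le> d w" by presburger
  ultimately show ?thesis using that by blast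
next
  case True
  have fin: "finite V" and lo: "2 * card V \<le> (\<Sum>v\<in>V. d v)"
    using adm unfolding core_cactus_admissible_def by auto
  \<comment> \<open>otherwise the leaf x would push the degree sum below 2 |V|\<close>
  have "\<exists>w\<in>V. 3 \<le> d w"
  proof (rule ccontr)
    assume "\<not> (\<exists>w\<in>V. 3 \<le> d w)"
    then have "(\<Sum>v\<in>V - {x}. d v) \<le> (\<Sum>v\<in>V - {x}. 2)" by (intro sum_mono) auto
    then have "(\<Sum>v\<in>V. d v) \<le> 1 + 2 * (card V - 1)"
      using sum.remove[OF fin x(1), of d] x(2) fin x(1) by simp
    moreover have "1 \<le> card V" using fin x(1) card_0_eq by fastforce
    ultimately show False using lo by linarith
  qed
  then show ?thesis using that True by blast
qed

lemma core_cactus_admissible_triangle_vertices: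
  assumes adm: "core_cactus_admissible V d" and no_leaf: "\<forall>v\<in>V. d v \<noteq> 1"
  obtains x y where "x \<in> V" "y \<in> V" "x \<noteq> y" "d x = 2" "d y = 2"
proof -
  define D where "D = {v \<in> V. d v \<noteq> 2}"
  have fin: "finite V" and up: "(\<Sum>v\<in>V. d v) + card {v \<in> V. d v = 1} + 3 \<le> 3 * card V"
    using adm unfolding core_cactus_admissible_def by auto
  have "{v \<in> V. d v = 1} = {}" using no_leaf by blast
  then have up': "(\<Sum>v\<in>V. d v) + 3 \<le> 3 * card V" using up by simp
  have "2 + 2 * of_bool (v \<in> D) \<le> d v" if v: "v \<in> V" for v
  proof (cases "d v = 2")
    case False
    then have "4 \<le> d v" using core_cactus_admissible_no_leaf_even[OF adm no_leaf v] by presburger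
    then show ?thesis by simp
  qed (simp add: D_def)
  then have "(\<Sum>v\<in>V. 2 + 2 * of_bool (v \<in> D)) \<le> (\<Sum>v\<in>V. d v)" by (rule sum_mono)
  moreover have "(\<Sum>v\<in>V. 2 + 2 * of_bool (v \<in> D)) = 2 * card V + 2 * card D"
  proof -
    have "(\<Sum>v\<in>V. 2 + 2 * of_bool (v \<in> D)) = (\<Sum>v\<in>V. 2) + 2 * (\<Sum>v\<in>V. of_bool (v \<in> D) :: nat)"
      by (simp only: sum.distrib sum_distrib_left)
    moreover have "V \<inter> D = D" unfolding D_def by blast
    ultimately show ?thesis using fin by simp
  qed
  ultimately have "2 * card D + 3 \<le> card V" using up' by linarith
  moreover have "card (V - D) = card V - card D"
    using fin unfolding D_def by (intro card_Diff_subset) auto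
  ultimately have "2 \<le> card (V - D)" by linarith
  then obtain S where "S \<subseteq> V - D" "card S = 2" by (rule obtain_subset_with_card_n)
  then obtain x y where "x \<in> V - D" "y \<in> V - D" "x \<noteq> y" by (auto simp: card_2_iff)
  then show ?thesis using that unfolding D_def by blast
qed

lemma cycle_or_pendant_realization_add_pendant:
  assumes fin: "finite V" and x: "x \<in> V" "d x = 1" and w: "w \<in> V" "3 \<le> d w"
    and G: "cycle_or_pendant_graph (V - {x}) E" and degs: "\<forall>v\<in>V - {x}. deg E v = (d(w := d w - 1)) v"
  shows "\<exists>E. cycle_or_pendant_graph V E \<and> (\<forall>v\<in>V. deg E v = d v)"
proof -
  have wV: "w \<in> V - {x}" using w x by auto
  then have wE: "w \<in> V - {x}" "2 \<le> deg E w" using degs w(2) by auto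
  note pendant = cycle_or_pendant_graph_add_pendant[OF _ G wE, of x]
  have "V - {x} \<union> {x} = V" using x(1) by blast
  moreover have "\<forall>v\<in>V. deg (E \<union> {{w, x}}) v = d v"
    using pendant(2) degs fin x(2) w(2) by auto
  ultimately show ?thesis using pendant(1) fin by auto
qed

lemma cycle_or_pendant_realization_add_triangle:
  assumes fin: "finite V" and xy: "x \<in> V" "y \<in> V" "x \<noteq> y" "d x = 2" "d y = 2"
    and w: "w \<in> V" "4 \<le> d w" and G: "cycle_or_pendant_graph (V - {x, y}) E"
    and degs: "\<forall>v\<in>V - {x, y}. deg E v = (d(w := d w - 2)) v"
  shows "\<exists>E. cycle_or_pendant_graph V E \<and> (\<forall>v\<in>V. deg E v = d v)"
proof -
  have wV: "w \<in> V - {x, y}" using w xy by auto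
  then have wE: "w \<in> V - {x, y}" "2 \<le> deg E w" using degs w(2) by auto
  note triangle = cycle_or_pendant_graph_add_triangle[OF _ G wE, of x y]
  have "V - {x, y} \<union> {x, y} = V" using xy by blast
  moreover have "\<forall>v\<in>V. deg (E \<union> cycle_edges [w, x, y]) v = d v"
    using triangle(2) degs fin xy w(2) by auto
  ultimately show ?thesis using triangle(1) fin xy by auto
qed

text \<open>Induction on the number of vertices: remove a leaf together with one unit of degree from
  a vertex of degree at least three, or two vertices of degree two together with two units from a
  vertex of degree at least four, and reattach them as a pendant edge or a triangle. If neither
  is possible, all degrees are two and a single cycle realizes them.\<close>
lemma core_cactus_admissible_imp_realization:
  assumes "core_cactus_admissible V d"
  shows "\<exists>E. cycle_or_pendant_graph V E \<and> (\<forall>v\<in>V. deg E v = d v)"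
  using assms
proof (induction "card V" arbitrary: V d rule: less_induct)
  case less
  note adm = less.prems
  have fin: "finite V" using adm unfolding core_cactus_admissible_def by blast
  consider (leaf) x where "x \<in> V" "d x = 1" | (cycle) "\<forall>v\<in>V. d v = 2"
    | (triangle) w where "\<forall>v\<in>V. d v \<noteq> 1" "w \<in> V" "d w \<noteq> 2" by blast
  then show ?case
  proof cases
    case (leaf x)
    obtain w where w: "w \<in> V" "3 \<le> d w" "odd (d w) \<or> {v \<in> V. odd (d v) \<and> 1 < d v} = {}"
      using core_cactus_admissible_leaf_anchor[OF adm leaf] .
    have "core_cactus_admissible (V - {x}) (d(w := d w - 1))"
      using core_cactus_admissible_remove_leaf[OF adm leaf w] .
    moreover have "card (V - {x}) < card V" using card_Diff1_less[OF fin leaf(1)] .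
    ultimately show ?thesis
      using less.hyps cycle_or_pendant_realization_add_pendant[OF fin leaf w(1,2)] by blast
  next
    case cycle
    have "{v \<in> V. d v = 1} = {}" using cycle by auto
    then have "3 \<le> card V"
      using adm cycle unfolding core_cactus_admissible_def by simp
    moreover define vs where "vs = sorted_list_of_set V"
    ultimately have vs: "distinct vs" "set vs = V" "3 \<le> length vs" using fin by auto
    show ?thesis
      using cycle_or_pendant_graph_cycle[OF vs(1,3)] deg_cycle_edges[OF vs(1,3)] vs(2) cycle by auto
  next
    case (triangle w)
    have w4: "4 \<le> d w"
      using core_cactus_admissible_no_leaf_even[OF adm triangle(1,2)] triangle(3) by presburger
    obtain x y where xy: "x \<in> V" "y \<in> V" "x \<noteq> y" "d x = 2" "d y = 2"
      using core_cactus_admissible_triangle_vertices[OF adm triangle(1)] .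
    have "core_cactus_admissible (V - {x, y}) (d(w := d w - 2))"
      using core_cactus_admissible_remove_triangle[OF adm triangle(1) xy triangle(2) w4] .
    moreover have "card (V - {x, y}) < card V"
      unfolding Diff_insert2[of V x "{y}"] using card_Diff2_less[OF fin xy(1,2)] .
    ultimately show ?thesis
      using less.hyps cycle_or_pendant_realization_add_triangle[OF fin xy triangle(2) w4] by blast
  qed
qed

lemma core_cactus_realizable_iff:
  assumes fin: "finite V" and V3: "3 \<le> card V" and pos: "\<forall>v\<in>V. 1 \<le> d v"
    and ev: "even (\<Sum>v\<in>V. d v)" and lo: "2 * card V \<le> (\<Sum>v\<in>V. d v)"
  shows "(\<exists>E. simple_graph V E \<and> (\<forall>v\<in>V. deg E v = d v) \<and> core_cactus V E) \<longleftrightarrow>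
    card {v \<in> V. odd (d v) \<and> 1 < d v} \<le> card {v \<in> V. d v = 1} \<and>
    (\<Sum>v\<in>V. d v) + card {v \<in> V. d v = 1} + 3 \<le> 3 * card V"
proof
  assume "\<exists>E. simple_graph V E \<and> (\<forall>v\<in>V. deg E v = d v) \<and> core_cactus V E"
  then obtain E where sg: "simple_graph V E" and degs: "\<forall>v\<in>V. deg E v = d v"
    and core: "core_cactus V E" by blast
  have "(\<Sum>v\<in>V. d v) = 2 * card E"
    using sum_deg_eq_twice_card[OF fin sg] degs by simp
  moreover have "2 * card E + card {v \<in> V. deg E v = 1} + 3 \<le> 3 * card V"
    using cactus_card_edges_bound[OF fin _ V3] core unfolding core_cactus_def by blast
  moreover have "card {v \<in> V. odd (deg E v) \<and> 1 < deg E v} \<le> card {v \<in> V. deg E v = 1}"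
    using core_cactus_odd_le_leaves[OF fin core] pos degs by simp
  ultimately show "card {v \<in> V. odd (d v) \<and> 1 < d v} \<le> card {v \<in> V. d v = 1} \<and>
      (\<Sum>v\<in>V. d v) + card {v \<in> V. d v = 1} + 3 \<le> 3 * card V"
    using degs by (simp cong: conj_cong)
next
  assume "card {v \<in> V. odd (d v) \<and> 1 < d v} \<le> card {v \<in> V. d v = 1} \<and>
      (\<Sum>v\<in>V. d v) + card {v \<in> V. d v = 1} + 3 \<le> 3 * card V"
  then have "core_cactus_admissible V d"
    using fin pos ev lo unfolding core_cactus_admissible_def by blast
  then obtain E where "cycle_or_pendant_graph V E" "\<forall>v\<in>V. deg E v = d v"
    using core_cactus_admissible_imp_realization by blast
  then show "\<exists>E. simple_graph V E \<and> (\<forall>v\<in>V. deg E v = d v) \<and> core_cactus V E"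
    using core_cactus_if_cycle_or_pendant_graph unfolding cycle_or_pendant_graph_def by blast
qed

theorem theorem6p2:
  fixes n :: nat and d :: "nat \<Rightarrow> nat"
  assumes "degree_sequence n d"
    and "n \<ge> 3"
    and "(\<Sum>i=1..n. d i) > 2 * n"
  shows "(\<exists>E. realization n d E \<and> core_cactus {1..n} E) \<longleftrightarrow>
         (mu_odd n d \<le> mu1 n d \<and>
          int ((\<Sum>i=1..n. d i) div 2) \<le> (3 * (int n - 1) - int (mu1 n d)) div 2)"
proof -
  let ?S = "\<Sum>i=1..n. d i"
  have "\<forall>v\<in>{1..n}. 1 \<le> d v" "even ?S" using assms(1) unfolding degree_sequence_def by auto
  then have "(\<exists>E. realization n d E \<and> core_cactus {1..n} E) \<longleftrightarrow>
      mu_odd n d \<le> mu1 n d \<and> ?S + mu1 n d + 3 \<le> 3 * n"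
    using core_cactus_realizable_iff[of "{1..n}" d] assms(2,3)
    unfolding realization_def mu1_def mu_odd_def by (simp add: conj_ac)
  moreover have "?S + mu1 n d + 3 \<le> 3 * n \<longleftrightarrow>
      int (?S div 2) \<le> (3 * (int n - 1) - int (mu1 n d)) div 2"
    using \<open>even ?S\<close> by (auto elim!: evenE)
  ultimately show ?thesis by simp
qed

end
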